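(* If $h:[0,\infty)\to[\frac{\beta u_0-1}{r},\frac{\beta u_0}{r}]$ is a decreasing solution to the HJB equation, then $h$ is strictly decreasing.
   Context: Fix $\mu\in\mathbb R$, $\sigma>0$, $u_0>0$, $r>0$, $\beta>0$, $d>0$. The HJB equation is $$-rh(z)-\mu h'(z)+\tfrac{\sigma^2}{2}h''(z)+\sup_{u\in[0,u_0]}\{(\beta+h'(z))u\}=\mathbf 1_{\{z>d\}}.$$ A solution to the HJB equation is a function $h:[0,\infty)\to[\frac{\beta u_0-1}{r},\frac{\beta u_0}{r}]$ that is continuously differentiable on $[0,\infty)$, twice continuously differentiable on $[0,d]$ and on $(d,\infty)$ respectively (with $h'(0),h''(0)$ the right derivatives and $h''(d)$ the left second derivative), and satisfies the HJB equation for all $z\ge0$. *)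

theory Defs
  imports "HOL-Analysis.Analysis"
begin

text \<open>A solution to the HJB equation on [0,\<infinity>). The derivative functions dh (first
derivative) and ddh (second derivative) are witnesses: dh is the derivative of h on
[0,\<infinity>) (right derivative at 0) and is continuous there; ddh is the derivative of dh
on [0,d] (one-sided at the endpoints, so ddh d is the left second derivative) and on
(d,\<infinity>), continuous on each piece.\<close>

definition HJB_solution ::
  "real \<Rightarrow> real \<Rightarrow> real \<Rightarrow> real \<Rightarrow> real \<Rightarrow> real \<Rightarrow> (real \<Rightarrow> real) \<Rightarrow> bool" where
  "HJB_solution \<mu> \<sigma> u0 r \<beta> d h \<longleftrightarrow>
     (\<forall>z\<ge>0. (\<beta> * u0 - 1) / r \<le> h z \<and> h z \<le> \<beta> * u0 / r) \<and>
     (\<exists>dh ddh.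
        (\<forall>z\<ge>0. (h has_real_derivative dh z) (at z within {0..})) \<and>
        continuous_on {0..} dh \<and>
        (\<forall>z\<in>{0..d}. (dh has_real_derivative ddh z) (at z within {0..d})) \<and>
        continuous_on {0..d} ddh \<and>
        (\<forall>z>d. (dh has_real_derivative ddh z) (at z)) \<and>
        continuous_on {d<..} ddh \<and>
        (\<forall>z\<ge>0. - r * h z - \<mu> * dh z + \<sigma>\<^sup>2 / 2 * ddh z
                  + (SUP u\<in>{0..u0}. (\<beta> + dh z) * u)
                = (if z > d then 1 else 0)))"

end

theory Submission
  imports Defs
begin

text \<open>
  On an interval where \<open>h\<close> is constant, \<open>h' = h'' = 0\<close> and the HJB equation pins the
  constant to one of the two bounds: to \<open>(\<beta> u0 - 1) / r\<close> beyond \<open>d\<close>, to \<open>\<beta> u0 / r\<close> before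
  \<open>d\<close>. Being decreasing, \<open>h\<close> then keeps the lower bound on a whole ray \<open>[s, \<infinity>)\<close>, resp.
  the upper bound on a whole segment \<open>[0, t]\<close>, with \<open>h' = 0\<close> at the endpoint. Away from
  \<open>d\<close>, near such an endpoint \<open>\<beta> + h' > 0\<close>, so the equation is a linear second order
  ODE for \<open>h - c\<close> with zero Cauchy data, and uniqueness (a Gronwall estimate for
  \<open>(h - c)\<^sup>2 + h'\<^sup>2\<close>) extends the flat piece past the endpoint. At \<open>d\<close> itself the
  equation forces \<open>h'' < 0\<close> just left of \<open>d\<close>, resp. \<open>h'' > 0\<close> just right of it, which
  makes \<open>h'\<close> positive nearby, against monotonicity.
\<close>

lemma SUP_mult_atLeastAtMost:
  fixes k u0 :: real
  assumes "u0 > 0"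
  shows "(SUP u\<in>{0..u0}. k * u) = u0 * max k 0"
proof (cases "k \<ge> 0")
  case True
  have "(SUP u\<in>{0..u0}. k * u) = k * u0"
    by (rule cSup_eq_maximum) (use assms True in \<open>auto intro!: mult_left_mono\<close>)
  with True show ?thesis by simp
next
  case False
  have "(SUP u\<in>{0..u0}. k * u) = k * 0"
    by (rule cSup_eq_maximum) (use assms False in \<open>auto simp: mult_le_0_iff\<close>)
  with False show ?thesis by simp
qed

lemma nonneg_vanishes_if_deriv_le_self:
  fixes E E' :: "real \<Rightarrow> real"
  assumes "a \<le> b" and cont: "continuous_on {a..b} E"
    and deriv: "\<And>z. a < z \<Longrightarrow> z < b \<Longrightarrow> (E has_real_derivative E' z) (at z)"
    and growth: "\<And>z. a < z \<Longrightarrow> z < b \<Longrightarrow> E' z \<le> K * E z"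
    and "E a = 0" and "0 \<le> E b"
  shows "E b = 0"
proof -
  define F where "F z = E z * exp (- K * z)" for z
  have "F b \<le> F a"
  proof (rule DERIV_nonpos_imp_decreasing_open[OF \<open>a \<le> b\<close>])
    show "continuous_on {a..b} F"
      unfolding F_def by (intro continuous_intros cont)
    fix z assume z: "a < z" "z < b"
    have "(F has_real_derivative (E' z - K * E z) * exp (- K * z)) (at z)"
      unfolding F_def by (rule derivative_eq_intros deriv[OF z] | simp add: algebra_simps)+
    moreover have "(E' z - K * E z) * exp (- K * z) \<le> 0"
      using growth[OF z] by (simp add: mult_nonpos_nonneg)
    ultimately show "\<exists>y. (F has_real_derivative y) (at z) \<and> y \<le> 0" by blast
  qed
  then have "E b * exp (- K * b) \<le> 0"
    using \<open>E a = 0\<close> by (simp add: F_def)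
  with \<open>0 \<le> E b\<close> show ?thesis
    by (simp add: mult_le_0_iff)
qed

lemma nonneg_vanishes_if_abs_deriv_le_self:
  fixes E E' :: "real \<Rightarrow> real"
  assumes cont: "continuous_on {p..q} E"
    and deriv: "\<And>z. p < z \<Longrightarrow> z < q \<Longrightarrow> (E has_real_derivative E' z) (at z)"
    and growth: "\<And>z. p < z \<Longrightarrow> z < q \<Longrightarrow> \<bar>E' z\<bar> \<le> K * E z"
    and "\<And>z. z \<in> {p..q} \<Longrightarrow> 0 \<le> E z"
    and "z0 \<in> {p..q}" "E z0 = 0" "z \<in> {p..q}"
  shows "E z = 0"
proof (cases "z0 \<le> z")
  case True
  show ?thesis
  proof (rule nonneg_vanishes_if_deriv_le_self[OF True, of E E' K])
    show "continuous_on {z0..z} E"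
      using cont by (rule continuous_on_subset) (use assms in auto)
    show "E' t \<le> K * E t" if "z0 < t" "t < z" for t
      using that assms by (intro order_trans[OF abs_ge_self growth]) auto
  qed (use assms in \<open>auto intro!: deriv\<close>)
next
  case False
  have "(\<lambda>t. E (- t)) (- z) = 0"
  proof (rule nonneg_vanishes_if_deriv_le_self[of "- z0" "- z" "\<lambda>t. E (- t)" "\<lambda>t. - E' (- t)" K])
    show "continuous_on {- z0..- z} (\<lambda>t. E (- t))"
      by (intro continuous_on_compose2[OF cont] continuous_intros) (use assms False in auto)
    show "((\<lambda>t. E (- t)) has_real_derivative - E' (- t)) (at t)" if "- z0 < t" "t < - z" for t
      using deriv[of "- t"] that assms by (auto simp: DERIV_mirror[symmetric])
    show "- E' (- t) \<le> K * E (- t)" if "- z0 < t" "t < - z" for t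
      using that assms False by (intro order_trans[OF abs_ge_minus_self growth]) auto
  qed (use assms False in auto)
  then show ?thesis by simp
qed

lemma linear_ode2_vanishes:
  fixes g g' :: "real \<Rightarrow> real" and a b :: real
  assumes "continuous_on {p..q} g" and "continuous_on {p..q} g'"
    and g: "\<And>z. p < z \<Longrightarrow> z < q \<Longrightarrow> (g has_real_derivative g' z) (at z)"
    and g': "\<And>z. p < z \<Longrightarrow> z < q \<Longrightarrow> (g' has_real_derivative a * g z + b * g' z) (at z)"
    and "z0 \<in> {p..q}" "g z0 = 0" "g' z0 = 0" "z \<in> {p..q}"
  shows "g z = 0"
proof -
  define E where "E t = (g t)\<^sup>2 + (g' t)\<^sup>2" for t
  define E' where "E' t = (1 + a) * (2 * g t * g' t) + 2 * b * (g' t)\<^sup>2" for t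
  have "E z = 0"
  proof (rule nonneg_vanishes_if_abs_deriv_le_self[of p q E E' "\<bar>1 + a\<bar> + 2 * \<bar>b\<bar>" z0])
    show "continuous_on {p..q} E"
      unfolding E_def by (intro continuous_intros assms)
    show "(E has_real_derivative E' t) (at t)" if "p < t" "t < q" for t
      unfolding E_def E'_def
      by (rule derivative_eq_intros g[OF that] g'[OF that] refl | simp add: algebra_simps power2_eq_square)+
    show "\<bar>E' t\<bar> \<le> (\<bar>1 + a\<bar> + 2 * \<bar>b\<bar>) * E t" for t
    proof -
      have "\<bar>2 * g t * g' t\<bar> \<le> E t"
        using sum_squares_bound[of "g t" "g' t"] sum_squares_bound[of "- g t" "g' t"]
        by (simp add: E_def abs_le_iff)
      have "\<bar>E' t\<bar> \<le> \<bar>1 + a\<bar> * \<bar>2 * g t * g' t\<bar> + 2 * \<bar>b\<bar> * (g' t)\<^sup>2"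
        unfolding E'_def
        by (rule order_trans[OF abs_triangle_ineq]) (simp add: abs_mult)
      also have "\<dots> \<le> \<bar>1 + a\<bar> * E t + 2 * \<bar>b\<bar> * E t"
        by (intro add_mono mult_left_mono \<open>\<bar>2 * g t * g' t\<bar> \<le> E t\<close>) (auto simp: E_def)
      finally show ?thesis
        by (simp add: algebra_simps)
    qed
  qed (use assms in \<open>auto simp: E_def\<close>)
  then show ?thesis by (simp add: E_def)
qed

locale decreasing_HJB_solution =
  fixes \<mu> \<sigma> u0 r \<beta> d :: real and h dh ddh :: "real \<Rightarrow> real"
  assumes \<sigma>_pos: "\<sigma> > 0" and u0_pos: "u0 > 0" and r_pos: "r > 0" and \<beta>_pos: "\<beta> > 0"
    and d_pos: "d > 0"
    and h_bounds: "\<And>z. 0 \<le> z \<Longrightarrow> (\<beta> * u0 - 1) / r \<le> h z \<and> h z \<le> \<beta> * u0 / r"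
    and h_deriv: "\<And>z. 0 \<le> z \<Longrightarrow> (h has_real_derivative dh z) (at z within {0..})"
    and continuous_on_dh: "continuous_on {0..} dh"
    and dh_deriv_left: "\<And>z. z \<in> {0..d} \<Longrightarrow> (dh has_real_derivative ddh z) (at z within {0..d})"
    and continuous_on_ddh_left: "continuous_on {0..d} ddh"
    and dh_deriv_right: "\<And>z. d < z \<Longrightarrow> (dh has_real_derivative ddh z) (at z)"
    and hjb: "\<And>z. 0 \<le> z \<Longrightarrow> - r * h z - \<mu> * dh z + \<sigma>\<^sup>2 / 2 * ddh z
                  + (SUP u\<in>{0..u0}. (\<beta> + dh z) * u) = (if z > d then 1 else 0)"
    and h_antimono: "\<And>x y. 0 \<le> x \<Longrightarrow> x \<le> y \<Longrightarrow> h y \<le> h x"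
begin

lemma hjb_max:
  "0 \<le> z \<Longrightarrow> - r * h z - \<mu> * dh z + \<sigma>\<^sup>2 / 2 * ddh z + u0 * max (\<beta> + dh z) 0
     = (if z > d then 1 else 0)"
  using hjb[of z] SUP_mult_atLeastAtMost[OF u0_pos, of "\<beta> + dh z"] by simp

lemma h_has_deriv: "0 < z \<Longrightarrow> (h has_real_derivative dh z) (at z)"
  using h_deriv[of z] at_within_interior[of z "{0..}"] by simp

lemma dh_has_deriv: "0 < z \<Longrightarrow> z \<noteq> d \<Longrightarrow> (dh has_real_derivative ddh z) (at z)"
  using dh_deriv_left[of z] dh_deriv_right[of z] at_within_interior[of z "{0..d}"]
  by (cases "z < d") auto

lemma continuous_on_h: "continuous_on {0..} h"
  using DERIV_continuous_on h_deriv by blast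

lemma isCont_h: "0 < z \<Longrightarrow> isCont h z"
  using continuous_on_interior[OF continuous_on_h, of z] by simp

lemma isCont_dh: "0 < z \<Longrightarrow> isCont dh z"
  using continuous_on_interior[OF continuous_on_dh, of z] by simp

lemma dh_nonpos:
  assumes "0 < z"
  shows "dh z \<le> 0"
proof (rule ccontr)
  assume "\<not> dh z \<le> 0"
  then obtain e where "e > 0" and "\<forall>k>0. k < e \<longrightarrow> h z < h (z + k)"
    using DERIV_pos_inc_right[OF h_has_deriv[OF assms]] by auto
  then have "h z < h (z + e / 2)" by simp
  moreover have "h (z + e / 2) \<le> h z"
    using h_antimono[of z "z + e / 2"] assms \<open>e > 0\<close> by simp
  ultimately show False by simp
qed

lemma flat_derivs:
  assumes "0 \<le> a" and flat: "\<forall>w\<in>{a<..<b}. h w = c" and z: "z \<in> {a<..<b}"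
  shows "dh z = 0" and "z \<noteq> d \<Longrightarrow> ddh z = 0"
proof -
  have dh_flat: "dh w = 0" if w: "w \<in> {a<..<b}" for w
  proof (rule DERIV_local_const[OF h_has_deriv])
    show "0 < min (w - a) (b - w)" using w by simp
    show "\<forall>y. \<bar>w - y\<bar> < min (w - a) (b - w) \<longrightarrow> h w = h y"
      using flat w by (auto simp: abs_less_iff)
  qed (use w \<open>0 \<le> a\<close> in auto)
  then show "dh z = 0" using z .
  show "ddh z = 0" if "z \<noteq> d"
  proof (rule DERIV_local_const[OF dh_has_deriv])
    show "0 < min (z - a) (b - z)" using z by simp
    show "\<forall>y. \<bar>z - y\<bar> < min (z - a) (b - z) \<longrightarrow> dh z = dh y"
      using dh_flat z by (auto simp: abs_less_iff)
  qed (use z that \<open>0 \<le> a\<close> in auto)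
qed

lemma flat_level:
  assumes "0 \<le> a" "\<forall>w\<in>{a<..<b}. h w = c" "z \<in> {a<..<b}" "z \<noteq> d"
  shows "r * c = \<beta> * u0 - (if d < z then 1 else 0)"
  using hjb_max[of z] flat_derivs[OF assms(1-3)] assms \<beta>_pos by (auto simp: algebra_simps)

lemma flat_closure:
  assumes "0 \<le> a" "a < b" and flat: "\<forall>w\<in>{a<..<b}. h w = c" and z: "z \<in> {a..b}"
  shows "h z = c" and "dh z = 0"
proof -
  have "closure {a<..<b} \<subseteq> {0..}" using assms by auto
  then have "continuous_on (closure {a<..<b}) h" "continuous_on (closure {a<..<b}) dh"
    using continuous_on_subset continuous_on_h continuous_on_dh by blast+
  moreover have "z \<in> closure {a<..<b}" using z \<open>a < b\<close> by simp
  ultimately show "h z = c" "dh z = 0"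
    using continuous_constant_on_closure flat flat_derivs(1)[OF assms(1,3)] by metis+
qed

lemma flat_extends:
  assumes "0 < s" "s \<noteq> d" "h s = c" "dh s = 0"
    and level: "r * c = \<beta> * u0 - (if d < s then 1 else 0)"
  obtains e where "0 < e" "e < s" "\<forall>z\<in>{s - e..s + e}. h z = c"
proof -
  have "(dh \<longlongrightarrow> 0) (at s)"
    using isCont_dh[OF \<open>0 < s\<close>] \<open>dh s = 0\<close> by (simp add: isCont_def)
  then have "((\<lambda>z. \<beta> + dh z) \<longlongrightarrow> \<beta>) (at s)"
    using tendsto_add[OF tendsto_const] by fastforce
  then have "\<forall>\<^sub>F z in at s. 0 < \<beta> + dh z"
    using \<beta>_pos by (rule order_tendstoD)
  then obtain e0 where "e0 > 0" and e0: "\<And>z. z \<noteq> s \<Longrightarrow> dist z s < e0 \<Longrightarrow> 0 < \<beta> + dh z"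
    by (auto simp: eventually_at)
  define e where "e = min (e0 / 2) (min (s / 2) (\<bar>s - d\<bar> / 2))"
  have "0 < e" "e < e0" "e < s" "e < \<bar>s - d\<bar>"
    using \<open>e0 > 0\<close> assms by (auto simp: e_def min_less_iff_disj)
  have interval: "0 < z" "z \<noteq> d" "(d < z) = (d < s)" "0 < \<beta> + dh z" if "z \<in> {s - e..s + e}" for z
  proof -
    have "\<bar>z - s\<bar> \<le> e" using that by auto
    with \<open>e < s\<close> \<open>e < \<bar>s - d\<bar>\<close> show "0 < z" "z \<noteq> d" "(d < z) = (d < s)"
      by auto
    show "0 < \<beta> + dh z"
      using e0[of z] \<beta>_pos \<open>dh s = 0\<close> \<open>\<bar>z - s\<bar> \<le> e\<close> \<open>e < e0\<close>
      by (cases "z = s") (auto simp: dist_real_def)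
  qed
  have ode: "ddh z = 2 / \<sigma>\<^sup>2 * r * (h z - c) + 2 / \<sigma>\<^sup>2 * (\<mu> - u0) * dh z"
    if "z \<in> {s - e..s + e}" for z
  proof -
    have "ddh z = 2 / \<sigma>\<^sup>2 * (\<sigma>\<^sup>2 / 2 * ddh z)"
      using \<sigma>_pos by simp
    also have "\<sigma>\<^sup>2 / 2 * ddh z = r * (h z - c) + (\<mu> - u0) * dh z"
      using hjb_max[of z] interval[OF that] level by (auto simp: algebra_simps)
    finally show ?thesis
      by (simp only: distrib_left mult.assoc times_divide_eq_left)
  qed
  have "h z - c = 0" if "z \<in> {s - e..s + e}" for z
  proof (rule linear_ode2_vanishes[of "s - e" "s + e" "\<lambda>z. h z - c" dh])
    have "{s - e..s + e} \<subseteq> {0..}" using interval by force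
    then show "continuous_on {s - e..s + e} (\<lambda>z. h z - c)" "continuous_on {s - e..s + e} dh"
      by (auto intro!: continuous_intros intro: continuous_on_subset continuous_on_h continuous_on_dh)
    show "((\<lambda>z. h z - c) has_real_derivative dh t) (at t)" if "s - e < t" "t < s + e" for t
      using h_has_deriv[of t] interval[of t] that by (auto intro!: derivative_eq_intros)
    show "(dh has_real_derivative 2 / \<sigma>\<^sup>2 * r * (h t - c) + 2 / \<sigma>\<^sup>2 * (\<mu> - u0) * dh t) (at t)"
      if "s - e < t" "t < s + e" for t
      using dh_has_deriv[of t] interval[of t] ode[of t] that by auto
  qed (use that assms \<open>0 < e\<close> in auto)
  with \<open>0 < e\<close> \<open>e < s\<close> show thesis using that by auto
qed

lemma lower_level_not_at_d:
  assumes "r * h d = \<beta> * u0 - 1" and "dh d = 0"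
  shows False
proof -
  have "\<sigma>\<^sup>2 / 2 * ddh d = -1"
    using hjb_max[of d] assms d_pos \<beta>_pos by (simp add: algebra_simps)
  then have "ddh d = - 2 / \<sigma>\<^sup>2"
    using \<sigma>_pos by (simp add: field_simps)
  then have "ddh d < 0"
    using \<sigma>_pos by simp
  moreover have "(ddh \<longlongrightarrow> ddh d) (at_left d)"
    using continuous_on_Icc_at_leftD[OF continuous_on_ddh_left d_pos] .
  ultimately have "\<forall>\<^sub>F z in at_left d. ddh z < 0"
    by (simp add: order_tendstoD)
  then obtain b where "b < d" and concave: "\<And>z. b < z \<Longrightarrow> z < d \<Longrightarrow> ddh z < 0"
    using eventually_at_left[of 0 d] d_pos by auto
  define w where "w = max b (d / 2)"
  have "0 < w" "w < d" using \<open>b < d\<close> d_pos by (auto simp: w_def)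
  have "dh d < dh w"
  proof (rule DERIV_neg_imp_decreasing_open[OF \<open>w < d\<close>])
    show "continuous_on {w..d} dh"
      using continuous_on_dh by (rule continuous_on_subset) (use \<open>0 < w\<close> in auto)
    show "\<exists>y. (dh has_real_derivative y) (at z) \<and> y < 0" if "w < z" "z < d" for z
      using dh_has_deriv[of z] concave[of z] that \<open>0 < w\<close> by (auto simp: w_def)
  qed
  with \<open>dh d = 0\<close> dh_nonpos[OF \<open>0 < w\<close>] show False by simp
qed

lemma upper_level_not_at_d:
  assumes "r * h d = \<beta> * u0" and "dh d = 0"
  shows False
proof -
  define F where "F z = 1 + r * (h z - h d) + (\<mu> - u0) * dh z" for z
  have "(F \<longlongrightarrow> 1) (at d)" "((\<lambda>z. \<beta> + dh z) \<longlongrightarrow> \<beta>) (at d)"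
    using isCont_h[OF d_pos] isCont_dh[OF d_pos] \<open>dh d = 0\<close> unfolding F_def isCont_def
    by (auto intro!: tendsto_eq_intros)
  then have "\<forall>\<^sub>F z in at d. 0 < F z \<and> 0 < \<beta> + dh z"
    using \<beta>_pos by (auto intro!: eventually_conj order_tendstoD)
  then obtain b where "d < b" and pos: "\<And>z. d < z \<Longrightarrow> z < b \<Longrightarrow> 0 < F z \<and> 0 < \<beta> + dh z"
    using eventually_at_right[of d "d + 1"] by (auto simp: eventually_at_split)
  define w where "w = (d + b) / 2"
  have "d < w" "w < b" using \<open>d < b\<close> by (auto simp: w_def)
  have "dh d < dh w"
  proof (rule DERIV_pos_imp_increasing_open[OF \<open>d < w\<close>])
    show "continuous_on {d..w} dh"
      using continuous_on_dh by (rule continuous_on_subset) (use d_pos in auto)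
    fix z assume z: "d < z" "z < w"
    have "\<sigma>\<^sup>2 / 2 * ddh z = F z"
      using hjb_max[of z] pos[of z] z \<open>w < b\<close> d_pos assms(1) by (auto simp: F_def algebra_simps)
    then have "ddh z = 2 * F z / \<sigma>\<^sup>2"
      using \<sigma>_pos by (simp add: field_simps)
    then have "0 < ddh z"
      using pos[of z] z \<open>w < b\<close> \<sigma>_pos by simp
    then show "\<exists>y. (dh has_real_derivative y) (at z) \<and> y > 0"
      using dh_has_deriv[of z] z d_pos by auto
  qed
  with \<open>dh d = 0\<close> dh_nonpos[of w] \<open>d < w\<close> d_pos show False by simp
qed

lemma lower_bound_not_attained:
  assumes "0 \<le> x"
  shows "(\<beta> * u0 - 1) / r < h x"
proof (rule ccontr)
  define c where "c = (\<beta> * u0 - 1) / r"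
  have level: "r * c = \<beta> * u0 - 1" using r_pos by (simp add: c_def)
  assume "\<not> (\<beta> * u0 - 1) / r < h x"
  then have "h x = c" using h_bounds[OF assms] by (simp add: c_def)
  define S where "S = {z. 0 \<le> z \<and> h z = c}"
  define s where "s = Inf S"
  have "x \<in> S" "bdd_below S" using assms \<open>h x = c\<close> by (auto simp: S_def intro: bdd_belowI[of _ 0])
  have "0 \<le> s" unfolding s_def using \<open>x \<in> S\<close> by (intro cInf_greatest) (auto simp: S_def)
  have flat: "\<forall>w\<in>{s<..<b}. h w = c" for b
  proof
    fix w assume "w \<in> {s<..<b}"
    then obtain v where "v \<in> S" "v < w"
      using cInf_less_iff[OF _ \<open>bdd_below S\<close>] \<open>x \<in> S\<close> by (auto simp: s_def)
    then show "h w = c"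
      using h_antimono[of v w] h_bounds[of w] by (auto simp: S_def c_def)
  qed
  consider "s < d" | "d \<le> s" by linarith
  then show False
  proof cases
    case 1
    with flat_level[OF \<open>0 \<le> s\<close> flat[of d], of "(s + d) / 2"] level show False by auto
  next
    case 2
    then have "h s = c" "dh s = 0"
      using flat_closure[OF \<open>0 \<le> s\<close> _ flat, of "s + 1" s] by auto
    show False
    proof (cases "s = d")
      case True
      with lower_level_not_at_d \<open>h s = c\<close> \<open>dh s = 0\<close> level show False by simp
    next
      case False
      with 2 obtain e where "0 < e" "e < s" "\<forall>z\<in>{s - e..s + e}. h z = c"
        using flat_extends[of s c] d_pos \<open>h s = c\<close> \<open>dh s = 0\<close> level by auto
      then have "s - e \<in> S" by (auto simp: S_def)
      then have "s \<le> s - e" unfolding s_def using \<open>bdd_below S\<close> by (rule cInf_lower)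
      with \<open>0 < e\<close> show False by simp
    qed
  qed
qed

lemma upper_bound_not_attained:
  assumes "0 < y"
  shows "h y < \<beta> * u0 / r"
proof (rule ccontr)
  define c where "c = \<beta> * u0 / r"
  have level: "r * c = \<beta> * u0" using r_pos by (simp add: c_def)
  assume "\<not> h y < \<beta> * u0 / r"
  then have "h y = c" using h_bounds[of y] assms by (simp add: c_def)
  define S where "S = {z. 0 \<le> z \<and> h z = c}"
  define t where "t = Sup S"
  have flat_below: "h w = c" if "0 \<le> w" "w \<le> v" "v \<in> S" for v w
    using h_antimono[of w v] h_bounds[of w] that by (auto simp: S_def c_def)
  have "v \<le> d" if "v \<in> S" for v
  proof (rule ccontr)
    assume "\<not> v \<le> d"
    then have "\<forall>w\<in>{d<..<v}. h w = c" using d_pos by (auto intro!: flat_below[OF _ _ that])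
    with flat_level[of d v c "(d + v) / 2"] level d_pos \<open>\<not> v \<le> d\<close> show False by auto
  qed
  then have "bdd_above S" by (rule bdd_aboveI)
  have "y \<in> S" using assms \<open>h y = c\<close> by (simp add: S_def)
  then have "y \<le> t" "t \<le> d"
    unfolding t_def using \<open>bdd_above S\<close> \<open>\<And>v. v \<in> S \<Longrightarrow> v \<le> d\<close>
    by (auto intro: cSup_upper cSup_least)
  have flat: "\<forall>w\<in>{0<..<t}. h w = c"
  proof
    fix w assume "w \<in> {0<..<t}"
    then obtain v where "v \<in> S" "w < v"
      using less_cSup_iff[OF _ \<open>bdd_above S\<close>] \<open>y \<in> S\<close> by (auto simp: t_def)
    with flat_below[of w v] \<open>w \<in> {0<..<t}\<close> show "h w = c" by simp
  qed
  have "0 < t" using assms \<open>y \<le> t\<close> by simp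
  then have "h t = c" "dh t = 0"
    using flat_closure[OF _ _ flat, of t] by auto
  show False
  proof (cases "t = d")
    case True
    with upper_level_not_at_d \<open>h t = c\<close> \<open>dh t = 0\<close> level show False by simp
  next
    case False
    with \<open>t \<le> d\<close> obtain e where "0 < e" "\<forall>z\<in>{t - e..t + e}. h z = c"
      using flat_extends[of t c] \<open>0 < t\<close> \<open>h t = c\<close> \<open>dh t = 0\<close> level by auto
    then have "t + e \<in> S" using \<open>0 < t\<close> by (auto simp: S_def)
    then have "t + e \<le> t" unfolding t_def using \<open>bdd_above S\<close> by (rule cSup_upper)
    with \<open>0 < e\<close> show False by simp
  qed
qed

lemma strictly_decreasing:
  assumes "0 \<le> x" "x < y"
  shows "h y < h x"
proof (rule ccontr)
  assume "\<not> h y < h x"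
  then have "h y = h x" using h_antimono[of x y] assms by simp
  then have flat: "\<forall>w\<in>{x<..<y}. h w = h x"
    using h_antimono assms by (metis greaterThanLessThan_iff less_imp_le order_antisym order_trans)
  show False
  proof (cases "d < y")
    case True
    then have "r * h x = \<beta> * u0 - 1"
      using flat_level[OF \<open>0 \<le> x\<close> flat, of "(max x d + y) / 2"] assms
      by (auto simp: max_def split: if_splits)
    with lower_bound_not_attained[of y] \<open>h y = h x\<close> assms r_pos show False
      by (simp add: field_simps)
  next
    case False
    then have "r * h x = \<beta> * u0"
      using flat_level[OF \<open>0 \<le> x\<close> flat, of "(x + y) / 2"] assms by auto
    with upper_bound_not_attained[of y] \<open>h y = h x\<close> assms r_pos show False
      by (simp add: field_simps)
  qed
qed

end

theorem lemma2p1: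
  fixes \<mu> \<sigma> u0 r \<beta> d :: real and h :: "real \<Rightarrow> real"
  assumes "\<sigma> > 0" and "u0 > 0" and "r > 0" and "\<beta> > 0" and "d > 0"
    and "HJB_solution \<mu> \<sigma> u0 r \<beta> d h"
    and "\<forall>x y. 0 \<le> x \<longrightarrow> x \<le> y \<longrightarrow> h y \<le> h x"
  shows "\<forall>x y. 0 \<le> x \<longrightarrow> x < y \<longrightarrow> h y < h x"
proof -
  obtain dh ddh where
    "\<forall>z\<ge>0. (h has_real_derivative dh z) (at z within {0..})" "continuous_on {0..} dh"
    "\<forall>z\<in>{0..d}. (dh has_real_derivative ddh z) (at z within {0..d})" "continuous_on {0..d} ddh"
    "\<forall>z>d. (dh has_real_derivative ddh z) (at z)"
    "\<forall>z\<ge>0. - r * h z - \<mu> * dh z + \<sigma>\<^sup>2 / 2 * ddh z + (SUP u\<in>{0..u0}. (\<beta> + dh z) * u)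
       = (if z > d then 1 else 0)"
    using assms(6) unfolding HJB_solution_def by blast
  then interpret decreasing_HJB_solution \<mu> \<sigma> u0 r \<beta> d h dh ddh
    using assms by unfold_locales (auto simp: HJB_solution_def)
  show ?thesis using strictly_decreasing by blast
qed

end
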